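(* Let $G$ be a trigraph and let $\Gamma\subseteq\operatorname{Aut}(G)$ be a solvable group. Then there exists a partial contraction sequence of $G$ of width at most $4\Delta(G)$ whose last partition is the partition of $V(G)$ into $\Gamma$-orbits, i.e., which contracts $G$ to $G/\Gamma$.
   Context: A trigraph is a finite simple graph whose edges are each colored red or black. $\operatorname{Aut}(G)$ is the automorphism group of the underlying simple graph of $G$ (automorphisms need not preserve colors); $\Delta(G)$ is the maximum degree. The red degree of a vertex is the number of red edges incident to it. For a partition $\mathcal{P}$ of $V(G)$, the quotient trigraph $G/\mathcal{P}$ has vertex set $\mathcal{P}$; two distinct parts $U,W$ are joined by a black edge if every pair $\{u,w\}$ with $u\in U,w\in W$ is a black edge of $G$, are non-adjacent if no such pair is an edge, and are joined by a red edge otherwise; $G/\Gamma$ is the quotient by the partition into $\Gamma$-orbits. A partial contraction sequence of an $n$-vertex trigraph $G$ is a sequence $\mathcal{P}_n,\dots,\mathcal{P}_i$ of partitions of $V(G)$ where $\mathcal{P}_n$ is the partition into singletons and each $\mathcal{P}_j$ arises from $\mathcal{P}_{j+1}$ by merging two parts; its width is the maximum red degree over all $G/\mathcal{P}_j$ in the sequence. *)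

theory Defs
  imports "HOL-Algebra.Solvable_Groups" "HOL-Algebra.Bij"
begin

text \<open>A trigraph: finite vertex set V, edge set E of 2-element subsets of V,
  and the set R \<subseteq> E of red edges (the remaining edges E - R are black).\<close>

definition trigraph :: "'a set \<Rightarrow> 'a set set \<Rightarrow> 'a set set \<Rightarrow> bool" where
  "trigraph V E R \<longleftrightarrow> finite V \<and>
     E \<subseteq> {{u, v} | u v. u \<in> V \<and> v \<in> V \<and> u \<noteq> v} \<and> R \<subseteq> E"

definition Aut :: "'a set \<Rightarrow> 'a set set \<Rightarrow> ('a \<Rightarrow> 'a) set" where
  "Aut V E = {f \<in> Bij V. \<forall>u\<in>V. \<forall>v\<in>V. {u, v} \<in> E \<longleftrightarrow> {f u, f v} \<in> E}"

definition degree :: "'a set \<Rightarrow> 'a set set \<Rightarrow> 'a \<Rightarrow> nat" where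
  "degree V E v = card {w \<in> V. {v, w} \<in> E}"

definition max_degree :: "'a set \<Rightarrow> 'a set set \<Rightarrow> nat" where
  "max_degree V E = Max (insert 0 (degree V E ` V))"

definition black_pair :: "'a set set \<Rightarrow> 'a set set \<Rightarrow> 'a set \<Rightarrow> 'a set \<Rightarrow> bool" where
  "black_pair E R U W \<longleftrightarrow> (\<forall>u\<in>U. \<forall>w\<in>W. {u, w} \<in> E \<and> {u, w} \<notin> R)"

definition nonadj_pair :: "'a set set \<Rightarrow> 'a set \<Rightarrow> 'a set \<Rightarrow> bool" where
  "nonadj_pair E U W \<longleftrightarrow> (\<forall>u\<in>U. \<forall>w\<in>W. {u, w} \<notin> E)"

definition red_pair :: "'a set set \<Rightarrow> 'a set set \<Rightarrow> 'a set \<Rightarrow> 'a set \<Rightarrow> bool" where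
  "red_pair E R U W \<longleftrightarrow> \<not> black_pair E R U W \<and> \<not> nonadj_pair E U W"

definition red_degree :: "'a set set \<Rightarrow> 'a set set \<Rightarrow> 'a set set \<Rightarrow> 'a set \<Rightarrow> nat" where
  "red_degree E R P U = card {W \<in> P. W \<noteq> U \<and> red_pair E R U W}"

definition singletons :: "'a set \<Rightarrow> 'a set set" where
  "singletons V = {{v} | v. v \<in> V}"

definition merge_step :: "'a set set \<Rightarrow> 'a set set \<Rightarrow> bool" where
  "merge_step P Q \<longleftrightarrow> (\<exists>A\<in>P. \<exists>B\<in>P. A \<noteq> B \<and> Q = (P - {A, B}) \<union> {A \<union> B})"

text \<open>A partial contraction sequence, as the list [P_n, ..., P_i].\<close>
definition partial_contraction_seq :: "'a set \<Rightarrow> 'a set set list \<Rightarrow> bool" where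
  "partial_contraction_seq V Ps \<longleftrightarrow> Ps \<noteq> [] \<and> hd Ps = singletons V \<and>
     (\<forall>i. Suc i < length Ps \<longrightarrow> merge_step (Ps ! i) (Ps ! Suc i))"

definition seq_width_le :: "'a set set \<Rightarrow> 'a set set \<Rightarrow> 'a set set list \<Rightarrow> nat \<Rightarrow> bool" where
  "seq_width_le E R Ps d \<longleftrightarrow> (\<forall>P\<in>set Ps. \<forall>U\<in>P. red_degree E R P U \<le> d)"

definition orbit_partition :: "'a set \<Rightarrow> ('a \<Rightarrow> 'a) set \<Rightarrow> 'a set set" where
  "orbit_partition V \<Gamma> = {{g v | g. g \<in> \<Gamma>} | v. v \<in> V}"

end

(*
  Write 1 = M_0 <= M_1 <= ... <= M_k = Gamma where each M_(i+1) is generated by M_i and one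
  element h normalising M_i; such a chain refines every series with abelian factors, because an
  element of H normalises every subgroup lying between [H, H] and H. It therefore suffices to
  contract the partition into M-orbits to the partition into <M, h>-orbits so that every
  intermediate part is adjacent to at most 4 Delta other parts.

  Since h normalises M it permutes the M-orbits, and the <M, h>-orbits are the unions of the
  h-cycles O, h O, ..., h^(L-1) O of M-orbits. Each cycle is contracted in rounds: after round s
  its parts are the arcs between consecutive multiples of 2^s (positions counted mod L), and
  round s + 1 deletes, one at a time, the cut points that are not multiples of 2^(s+1). During a
  round every arc spans fewer than 2^(s+1) positions and, except possibly the last arc of its
  cycle, at least 2^s of them. All vertices of an M-orbit see the same M-orbits, so every part
  adjacent to an arc U contains h^i w for a neighbour w of one fixed vertex of U and one of the
  positions i of U; for fixed w these translates meet at most 4 parts. Hence every part has at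
  most 4 Delta adjacent parts, which bounds its red degree.
*)

theory Submission
  imports Defs "HOL-Algebra.Multiplicative_Group"
begin

section \<open>Contraction sequences with bounded adjacency\<close>

definition adjacent_parts :: "'a set set \<Rightarrow> 'a set set \<Rightarrow> 'a set \<Rightarrow> 'a set set" where
  "adjacent_parts E P U = {W \<in> P. W \<noteq> U \<and> (\<exists>u\<in>U. \<exists>w\<in>W. {u, w} \<in> E)}"

definition adjacency_bounded :: "'a set set \<Rightarrow> nat \<Rightarrow> 'a set set \<Rightarrow> bool" where
  "adjacency_bounded E d P \<longleftrightarrow> finite P \<and> (\<forall>U\<in>P. card (adjacent_parts E P U) \<le> d)"

definition bounded_merge :: "'a set set \<Rightarrow> nat \<Rightarrow> 'a set set \<Rightarrow> 'a set set \<Rightarrow> bool" where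
  "bounded_merge E d P Q \<longleftrightarrow>
     merge_step P Q \<and> adjacency_bounded E d P \<and> adjacency_bounded E d Q"

lemma red_degree_le_card_adjacent_parts:
  assumes "finite P"
  shows "red_degree E R P U \<le> card (adjacent_parts E P U)"
proof -
  have "{W \<in> P. W \<noteq> U \<and> red_pair E R U W} \<subseteq> adjacent_parts E P U"
    unfolding red_pair_def nonadj_pair_def adjacent_parts_def by blast
  moreover have "finite (adjacent_parts E P U)"
    using assms unfolding adjacent_parts_def by simp
  ultimately show ?thesis
    unfolding red_degree_def by (rule card_mono[rotated])
qed

lemma seq_width_le_if_adjacency_bounded:
  assumes "\<forall>P\<in>set Ps. adjacency_bounded E d P"
  shows "seq_width_le E R Ps d"
  unfolding seq_width_le_def
proof (intro ballI)
  fix P U assume "P \<in> set Ps" and "U \<in> P"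
  then have "finite P" and "card (adjacent_parts E P U) \<le> d"
    using assms unfolding adjacency_bounded_def by auto
  then show "red_degree E R P U \<le> d"
    using red_degree_le_card_adjacent_parts le_trans by blast
qed

lemma adjacency_bounded_singletons:
  assumes "finite V" and "\<And>v. v \<in> V \<Longrightarrow> degree V E v \<le> d"
  shows "adjacency_bounded E d (singletons V)"
proof -
  have singletons: "singletons V = (\<lambda>v. {v}) ` V"
    unfolding singletons_def by blast
  have "card (adjacent_parts E (singletons V) {v}) \<le> d" if "v \<in> V" for v
  proof -
    have "adjacent_parts E (singletons V) {v} \<subseteq> (\<lambda>w. {w}) ` {w \<in> V. {v, w} \<in> E}"
      unfolding adjacent_parts_def singletons by auto
    then have "card (adjacent_parts E (singletons V) {v}) \<le> card ((\<lambda>w. {w}) ` {w \<in> V. {v, w} \<in> E})"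
      using assms(1) by (intro card_mono) auto
    also have "\<dots> \<le> card {w \<in> V. {v, w} \<in> E}"
      by (rule card_image_le) (use assms(1) in simp)
    finally show ?thesis
      using assms(2)[OF that] unfolding degree_def by simp
  qed
  then show ?thesis
    unfolding adjacency_bounded_def singletons using assms(1) by auto
qed

lemma partial_contraction_seq_snoc:
  assumes "partial_contraction_seq V Ps" and "merge_step (last Ps) Q"
  shows "partial_contraction_seq V (Ps @ [Q])"
  unfolding partial_contraction_seq_def
proof (intro conjI allI impI)
  show "Ps @ [Q] \<noteq> []" and "hd (Ps @ [Q]) = singletons V"
    using assms(1) unfolding partial_contraction_seq_def by auto
  fix i assume "Suc i < length (Ps @ [Q])"
  then consider "Suc i < length Ps" | "Suc i = length Ps"
    by fastforce
  then show "merge_step ((Ps @ [Q]) ! i) ((Ps @ [Q]) ! Suc i)"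
  proof cases
    case 1
    then show ?thesis
      using assms(1) unfolding partial_contraction_seq_def by (simp add: nth_append)
  next
    case 2
    then have "Ps \<noteq> []" and "i = length Ps - 1"
      by auto
    then have "Ps ! i = last Ps"
      by (simp add: last_conv_nth)
    then show ?thesis
      using 2 assms(2) by (simp add: nth_append)
  qed
qed

lemma partial_contraction_seq_if_bounded_merges:
  assumes "(bounded_merge E d)\<^sup>*\<^sup>* (singletons V) Q"
    and "adjacency_bounded E d (singletons V)"
  shows "\<exists>Ps. partial_contraction_seq V Ps \<and> seq_width_le E R Ps d \<and> last Ps = Q"
proof -
  from assms(1) have "\<exists>Ps. partial_contraction_seq V Ps \<and>
      (\<forall>P\<in>set Ps. adjacency_bounded E d P) \<and> last Ps = Q"
  proof (induction rule: rtranclp_induct)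
    case base
    show ?case
      using assms(2) by (intro exI[of _ "[singletons V]"]) (simp add: partial_contraction_seq_def)
  next
    case (step P Q)
    then obtain Ps where "partial_contraction_seq V Ps" "\<forall>P\<in>set Ps. adjacency_bounded E d P"
      "last Ps = P"
      by blast
    with step.hyps(2) show ?case
      unfolding bounded_merge_def
      by (intro exI[of _ "Ps @ [Q]"]) (auto intro: partial_contraction_seq_snoc)
  qed
  then show ?thesis
    using seq_width_le_if_adjacency_bounded by blast
qed

definition fibre :: "'a set \<Rightarrow> ('a \<Rightarrow> 'b) \<Rightarrow> 'a \<Rightarrow> 'a set" where
  "fibre V f x = {y \<in> V. f y = f x}"

definition fibres :: "'a set \<Rightarrow> ('a \<Rightarrow> 'b) \<Rightarrow> 'a set set" where
  "fibres V f = fibre V f ` V"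

lemma fibre_eq: "y \<in> fibre V f z \<Longrightarrow> fibre V f y = fibre V f z"
  unfolding fibre_def by auto

lemma fibres_cong: "(\<And>x. x \<in> V \<Longrightarrow> f x = g x) \<Longrightarrow> fibres V f = fibres V g"
  unfolding fibres_def fibre_def by (intro image_cong) auto

lemma fibres_identify_values:
  assumes a: "a \<in> V" and b: "b \<in> V" and ne: "f a \<noteq> f b"
    and g: "\<And>x. x \<in> V \<Longrightarrow> g x = (if f x = f b then f a else f x)"
  shows "fibres V g = (fibres V f - {fibre V f a, fibre V f b}) \<union> {fibre V f a \<union> fibre V f b}"
proof -
  define A where "A = fibre V f a"
  define B where "B = fibre V f b"
  have other: "fibre V g x = fibre V f x" if "x \<in> V" "f x \<noteq> f a" "f x \<noteq> f b" for x
    using that by (auto simp: fibre_def g split: if_splits)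
  have merged: "fibre V g x = A \<union> B" if "x \<in> V" "f x = f a \<or> f x = f b" for x
    using that ne a by (auto simp: A_def B_def fibre_def g)
  show ?thesis
    unfolding A_def[symmetric] B_def[symmetric]
  proof (intro equalityI subsetI)
    fix X assume "X \<in> fibres V g"
    then obtain x where x: "x \<in> V" "X = fibre V g x"
      unfolding fibres_def by blast
    show "X \<in> (fibres V f - {A, B}) \<union> {A \<union> B}"
    proof (cases "f x = f a \<or> f x = f b")
      case True
      then show ?thesis using merged x by blast
    next
      case False
      have "x \<in> fibre V f x" "x \<notin> A" "x \<notin> B"
        using x(1) False by (auto simp: fibre_def A_def B_def)
      moreover have "X = fibre V f x"
        using other x False by auto
      ultimately show ?thesis
        using x(1) unfolding fibres_def by blast
    qed
  next
    fix X assume X: "X \<in> (fibres V f - {A, B}) \<union> {A \<union> B}"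
    show "X \<in> fibres V g"
    proof (cases "X = A \<union> B")
      case True
      then show ?thesis using merged[OF a] a unfolding fibres_def by blast
    next
      case False
      then obtain x where "x \<in> V" "X = fibre V f x" "X \<noteq> A" "X \<noteq> B"
        using X unfolding fibres_def by blast
      then have "f x \<noteq> f a" "f x \<noteq> f b"
        unfolding A_def B_def fibre_def by auto
      then have "X = fibre V g x"
        using other \<open>x \<in> V\<close> \<open>X = fibre V f x\<close> by auto
      then show ?thesis
        using \<open>x \<in> V\<close> unfolding fibres_def by blast
    qed
  qed
qed

lemma merge_step_fibres:
  assumes "a \<in> V" and "b \<in> V" and "f a \<noteq> f b"
    and "\<And>x. x \<in> V \<Longrightarrow> g x = (if f x = f b then f a else f x)"
  shows "merge_step (fibres V f) (fibres V g)"
proof -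
  have "fibre V f a \<in> fibres V f" "fibre V f b \<in> fibres V f" "fibre V f a \<noteq> fibre V f b"
    using assms(1-3) unfolding fibres_def fibre_def by auto
  moreover have "fibres V g = (fibres V f - {fibre V f a, fibre V f b}) \<union> {fibre V f a \<union> fibre V f b}"
    by (rule fibres_identify_values[OF assms])
  ultimately show ?thesis
    unfolding merge_step_def by blast
qed

section \<open>Cut points on a cycle\<close>

definition floor_in :: "nat set \<Rightarrow> nat \<Rightarrow> nat" where
  "floor_in C j = Max {c \<in> C. c \<le> j}"

lemma
  assumes "finite C" and "0 \<in> C"
  shows floor_in_mem: "floor_in C j \<in> C"
    and floor_in_le: "floor_in C j \<le> j"
    and le_floor_in: "c \<in> C \<Longrightarrow> c \<le> j \<Longrightarrow> c \<le> floor_in C j"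
proof -
  have fin: "finite {c \<in> C. c \<le> j}" and ne: "{c \<in> C. c \<le> j} \<noteq> {}"
    using assms by auto
  show "floor_in C j \<in> C" "floor_in C j \<le> j"
    using Max_in[OF fin ne] unfolding floor_in_def by auto
  show "c \<in> C \<Longrightarrow> c \<le> j \<Longrightarrow> c \<le> floor_in C j"
    using Max_ge[OF fin] unfolding floor_in_def by auto
qed

lemma floor_in_eqI:
  assumes "finite C" "0 \<in> C" "m \<in> C" "m \<le> j" "\<And>c. c \<in> C \<Longrightarrow> c \<le> j \<Longrightarrow> c \<le> m"
  shows "floor_in C j = m"
  using assms floor_in_mem floor_in_le le_floor_in by (meson le_antisym)

lemma floor_in_self: "finite C \<Longrightarrow> 0 \<in> C \<Longrightarrow> c \<in> C \<Longrightarrow> floor_in C c = c"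
  by (rule floor_in_eqI) auto

lemma floor_in_remove:
  assumes "finite C" and "0 \<in> C" and "c \<noteq> 0"
  shows "floor_in (C - {c}) j = (if floor_in C j = c then floor_in C (c - 1) else floor_in C j)"
proof -
  have C': "finite (C - {c})" "0 \<in> C - {c}"
    using assms by auto
  note floor = floor_in_mem[OF assms(1,2)] floor_in_le[OF assms(1,2)] le_floor_in[OF assms(1,2)]
  show ?thesis
  proof (cases "floor_in C j = c")
    case True
    have "floor_in (C - {c}) j = floor_in C (c - 1)"
    proof (rule floor_in_eqI[OF C'])
      show "floor_in C (c - 1) \<in> C - {c}" "floor_in C (c - 1) \<le> j"
        using True floor[of "c - 1"] floor(2)[of j] assms(3) by auto
      show "d \<le> floor_in C (c - 1)" if "d \<in> C - {c}" "d \<le> j" for d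
        using that floor(3)[of d j] floor(3)[of d "c - 1"] True by auto
    qed
    then show ?thesis
      using True by simp
  next
    case False
    have "floor_in (C - {c}) j = floor_in C j"
    proof (rule floor_in_eqI[OF C'])
      show "floor_in C j \<in> C - {c}" "floor_in C j \<le> j"
        using False floor(1,2) by auto
      show "d \<le> floor_in C j" if "d \<in> C - {c}" "d \<le> j" for d
        using that floor(3) by auto
    qed
    then show ?thesis
      using False by simp
  qed
qed

lemma floor_in_div_mult:
  assumes "finite C" and "0 \<in> C" and "\<And>c. c \<in> C \<Longrightarrow> q dvd c" and "0 < q"
  shows "floor_in C j = floor_in C (q * (j div q))"
proof -
  have "c \<le> j \<longleftrightarrow> c \<le> q * (j div q)" if "c \<in> C" for c
  proof -
    from assms(3)[OF that] obtain t where c: "c = q * t"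
      by (rule dvdE)
    then have "c \<le> j \<longleftrightarrow> t * q \<le> j"
      by (simp add: mult.commute)
    also have "\<dots> \<longleftrightarrow> t \<le> j div q"
      by (rule less_eq_div_iff_mult_less_eq[OF assms(4), symmetric])
    also have "\<dots> \<longleftrightarrow> c \<le> q * (j div q)"
      using c assms(4) by simp
    finally show ?thesis .
  qed
  then have "{c \<in> C. c \<le> j} = {c \<in> C. c \<le> q * (j div q)}"
    by auto
  then show ?thesis
    unfolding floor_in_def by simp
qed

definition dyadic_points :: "nat \<Rightarrow> nat \<Rightarrow> nat set" where
  "dyadic_points s L = {j. j < L \<and> 2 ^ s dvd j}"

lemma dyadic_points_Suc_subset: "dyadic_points (Suc s) L \<subseteq> dyadic_points s L"
proof
  fix j assume "j \<in> dyadic_points (Suc s) L"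
  then have "j < L" and "2 ^ Suc s dvd j"
    unfolding dyadic_points_def by auto
  moreover have "2 ^ s dvd (2::nat) ^ Suc s"
    by simp
  ultimately show "j \<in> dyadic_points s L"
    unfolding dyadic_points_def using dvd_trans by blast
qed

lemma floor_in_gap:
  assumes "finite C" and "0 \<in> C" and "dyadic_points (Suc s) L \<subseteq> C" and "j < L"
  shows "j < floor_in C j + 2 ^ Suc s"
proof (rule ccontr)
  define c where "c = floor_in C j"
  define q :: nat where "q = 2 ^ Suc s"
  define m where "m = q * (c div q + 1)"
  have "0 < q"
    unfolding q_def by simp
  then have "c < m" and "m \<le> c + q"
    using mult_div_mod_eq[of q c] mod_less_divisor[of q c]
    unfolding m_def distrib_left mult_1_right by linarith+
  assume "\<not> j < floor_in C j + 2 ^ Suc s"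
  then have "m \<le> j"
    using \<open>m \<le> c + q\<close> unfolding c_def q_def by linarith
  moreover have "q dvd m"
    unfolding m_def by simp
  ultimately have "m \<in> C"
    using assms(3,4) unfolding dyadic_points_def q_def by auto
  then have "m \<le> c"
    using le_floor_in[OF assms(1,2) _ \<open>m \<le> j\<close>] unfolding c_def by blast
  with \<open>c < m\<close> show False
    by simp
qed

lemma card_div_image_atLeastAtMost:
  assumes "0 < q"
  shows "card ((\<lambda>k. k div q) ` {a..b}) \<le> (b - a) div q + 2"
proof (cases "a \<le> b")
  case True
  have "(\<lambda>k. k div q) ` {a..b} \<subseteq> {a div q..b div q}"
    by (auto intro: div_le_mono)
  then have "card ((\<lambda>k. k div q) ` {a..b}) \<le> Suc (b div q) - a div q"
    by (metis card_atLeastAtMost card_mono finite_atLeastAtMost)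
  moreover have "b div q \<le> a div q + (b - a) div q + 1"
  proof -
    have "b div q = a div q + (b - a) div q + (a mod q + (b - a) mod q) div q"
      using True div_add1_eq[of a "b - a" q] by simp
    moreover have "(a mod q + (b - a) mod q) div q < 2"
    proof (rule less_mult_imp_div_less)
      show "a mod q + (b - a) mod q < 2 * q"
        using mod_less_divisor[OF assms, of a] mod_less_divisor[OF assms, of "b - a"] by linarith
    qed
    ultimately show ?thesis
      by linarith
  qed
  ultimately show ?thesis
    by linarith
qed simp

lemma card_div_image_atMost: "card ((\<lambda>k. k div q) ` {..b}) \<le> b div q + 1"
proof -
  have "(\<lambda>k. k div q) ` {..b} \<subseteq> {..b div q}"
    by (auto intro: div_le_mono)
  then show ?thesis
    by (metis Suc_eq_plus1 card_atMost card_mono finite_atMost)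
qed

lemma mod_image_subset:
  fixes L a b :: nat
  shows "(\<lambda>k. k mod L) ` {a..<b} \<subseteq> {a..L - 1} \<union> {..b - 1 - L}"
proof
  fix z assume "z \<in> (\<lambda>k. k mod L) ` {a..<b}"
  then obtain k where k: "a \<le> k" "k < b" "z = k mod L"
    by auto
  show "z \<in> {a..L - 1} \<union> {..b - 1 - L}"
  proof (cases "k < L")
    case True
    then show ?thesis
      using k by auto
  next
    case False
    then have "k mod L = (k - L) mod L"
      by (simp add: le_mod_geq)
    also have "\<dots> \<le> k - L"
      by simp
    also have "\<dots> \<le> b - 1 - L"
      using k(2) by simp
    finally show ?thesis
      using k(3) by auto
  qed
qed

text \<open>A window of \<open>2 q\<close> consecutive positions on a cycle of length \<open>L\<close> meets at most four
  blocks \<open>[t q, (t + 1) q)\<close>; the fourth is needed because the block just before the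
  wrap-around may be shorter than \<open>q\<close>.\<close>

lemma card_wrapping_window_le:
  fixes L q a :: nat
  assumes "a < L" and "L < a + 2 * q"
  shows "card ((\<lambda>k. (k mod L) div q) ` {a..<a + 2 * q}) \<le> 4"
proof -
  define u where "u = L - 1 - a"
  define w where "w = a + 2 * q - 1 - L"
  have "0 < q"
    using assms by simp
  have "u div q + w div q \<le> (u + w) div q"
    using div_add1_eq[of u w q] by simp
  also have "(u + w) div q < 2"
    using assms by (intro less_mult_imp_div_less) (simp add: u_def w_def)
  finally have bound: "u div q + w div q \<le> 1"
    by simp
  have "(\<lambda>k. (k mod L) div q) ` {a..<a + 2 * q} = (\<lambda>k. k div q) ` (\<lambda>k. k mod L) ` {a..<a + 2 * q}"
    by (simp add: image_image)
  also have "\<dots> \<subseteq> (\<lambda>k. k div q) ` {a..L - 1} \<union> (\<lambda>k. k div q) ` {..w}"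
    unfolding w_def image_Un[symmetric] by (rule image_mono[OF mod_image_subset])
  finally have "card ((\<lambda>k. (k mod L) div q) ` {a..<a + 2 * q})
      \<le> card ((\<lambda>k. k div q) ` {a..L - 1} \<union> (\<lambda>k. k div q) ` {..w})"
    by (intro card_mono) simp_all
  also have "\<dots> \<le> card ((\<lambda>k. k div q) ` {a..L - 1}) + card ((\<lambda>k. k div q) ` {..w})"
    by (rule card_Un_le)
  also have "\<dots> \<le> (u div q + 2) + (w div q + 1)"
    using card_div_image_atLeastAtMost[OF \<open>0 < q\<close>, of a "L - 1"] card_div_image_atMost[of q w]
    unfolding u_def by (intro add_mono) simp_all
  finally show ?thesis
    using bound by simp
qed

lemma card_cyclic_window_le:
  fixes L q a :: nat
  assumes "0 < L" and "0 < q"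
  shows "card ((\<lambda>k. (k mod L) div q) ` {a..<a + 2 * q}) \<le> 4"
proof -
  define a0 where "a0 = a mod L"
  have "a0 < L"
    using assms(1) unfolding a0_def by simp
  have "{a..<a + 2 * q} = (\<lambda>k. k + L * (a div L)) ` {a0..<a0 + 2 * q}"
    unfolding a0_def by (simp add: image_add_atLeastLessThan' ac_simps)
  then have window: "(\<lambda>k. (k mod L) div q) ` {a..<a + 2 * q}
      = (\<lambda>k. (k mod L) div q) ` {a0..<a0 + 2 * q}"
    by (simp only: image_image) simp
  show ?thesis
  proof (cases "a0 + 2 * q \<le> L")
    case True
    have "{a0..<a0 + 2 * q} = {a0..a0 + (2 * q - 1)}"
      using assms(2) by auto
    then have "(\<lambda>k. (k mod L) div q) ` {a0..<a0 + 2 * q} = (\<lambda>k. k div q) ` {a0..a0 + (2 * q - 1)}"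
      using True by (intro image_cong) auto
    moreover have "(2 * q - 1) div q < 2"
      by (rule less_mult_imp_div_less) (use assms(2) in simp)
    ultimately show ?thesis
      using window card_div_image_atLeastAtMost[OF assms(2), of a0 "a0 + (2 * q - 1)"] by simp
  next
    case False
    then show ?thesis
      using window card_wrapping_window_le[OF \<open>a0 < L\<close>] by simp
  qed
qed

section \<open>Coarsening along a cycle of classes\<close>

text \<open>In the application \<open>S\<close> is the orbit relation of a group \<open>M\<close> of automorphisms and
  \<open>h\<close> an automorphism normalising \<open>M\<close>, so \<open>h\<close> permutes the \<open>M\<close>-orbits.\<close>

locale cyclic_coarsening =
  fixes V :: "'a set" and E :: "'a set set" and S :: "'a \<Rightarrow> 'a \<Rightarrow> bool"
    and h :: "'a \<Rightarrow> 'a" and n :: nat and D :: nat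
  assumes finite_V: "finite V"
    and S_in_V: "S x y \<Longrightarrow> x \<in> V \<and> y \<in> V"
    and S_refl: "x \<in> V \<Longrightarrow> S x x"
    and S_sym: "S x y \<Longrightarrow> S y x"
    and S_trans: "S x y \<Longrightarrow> S y z \<Longrightarrow> S x z"
    and h_in_V: "x \<in> V \<Longrightarrow> h x \<in> V"
    and S_h_iff: "x \<in> V \<Longrightarrow> y \<in> V \<Longrightarrow> S (h x) (h y) \<longleftrightarrow> S x y"
    and edge_h_iff: "x \<in> V \<Longrightarrow> y \<in> V \<Longrightarrow> {h x, h y} \<in> E \<longleftrightarrow> {x, y} \<in> E"
    and period_pos: "0 < n"
    and h_period: "x \<in> V \<Longrightarrow> (h ^^ n) x = x"
    and S_neighbour: "S v x \<Longrightarrow> {x, y} \<in> E \<Longrightarrow> y \<in> V \<Longrightarrow> \<exists>w\<in>V. {v, w} \<in> E \<and> S w y"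
    and degree_le: "v \<in> V \<Longrightarrow> degree V E v \<le> D"
begin

lemma funpow_h_in_V: "x \<in> V \<Longrightarrow> (h ^^ i) x \<in> V"
  by (induct i) (auto simp: h_in_V)

lemma S_funpow_h_iff: "x \<in> V \<Longrightarrow> y \<in> V \<Longrightarrow> S ((h ^^ i) x) ((h ^^ i) y) \<longleftrightarrow> S x y"
  by (induct i) (auto simp: S_h_iff funpow_h_in_V)

lemma edge_funpow_h_iff: "x \<in> V \<Longrightarrow> y \<in> V \<Longrightarrow> {(h ^^ i) x, (h ^^ i) y} \<in> E \<longleftrightarrow> {x, y} \<in> E"
  by (induct i) (auto simp: edge_h_iff funpow_h_in_V)

lemma funpow_h_mult_period: "x \<in> V \<Longrightarrow> (h ^^ (n * k)) x = x"
proof (induct k)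
  case (Suc k)
  then show ?case
    using h_period by (simp add: funpow_add)
qed simp

lemma
  assumes "x \<in> V"
  shows funpow_h_inverse_left: "(h ^^ (n * i - i)) ((h ^^ i) x) = x"
    and funpow_h_inverse_right: "(h ^^ i) ((h ^^ (n * i - i)) x) = x"
proof -
  have "i \<le> n * i"
    using period_pos by simp
  then have "(h ^^ (n * i - i)) ((h ^^ i) x) = (h ^^ (n * i)) x"
    and "(h ^^ i) ((h ^^ (n * i - i)) x) = (h ^^ (n * i)) x"
    by (simp_all flip: funpow_add comp_apply[of "h ^^ _" "h ^^ _"])
  then show "(h ^^ (n * i - i)) ((h ^^ i) x) = x" and "(h ^^ i) ((h ^^ (n * i - i)) x) = x"
    using funpow_h_mult_period[OF assms] by simp_all
qed

definition joined :: "'a \<Rightarrow> 'a \<Rightarrow> bool" where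
  "joined x y \<longleftrightarrow> x \<in> V \<and> y \<in> V \<and> (\<exists>i. S ((h ^^ i) x) y)"

lemma joined_refl: "x \<in> V \<Longrightarrow> joined x x"
  unfolding joined_def using S_refl[of x] by (auto intro: exI[of _ 0])

lemma joined_sym:
  assumes "joined x y"
  shows "joined y x"
proof -
  obtain i where x: "x \<in> V" and y: "y \<in> V" and i: "S ((h ^^ i) x) y"
    using assms unfolding joined_def by blast
  have "S ((h ^^ (n * i - i)) ((h ^^ i) x)) ((h ^^ (n * i - i)) y)"
    using i S_funpow_h_iff funpow_h_in_V x y by blast
  then have "S x ((h ^^ (n * i - i)) y)"
    using funpow_h_inverse_left[OF x] by simp
  then show ?thesis
    unfolding joined_def using x y S_sym by blast
qed

lemma joined_trans:
  assumes "joined x y" and "joined y z"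
  shows "joined x z"
proof -
  obtain i j where x: "x \<in> V" and y: "y \<in> V" and z: "z \<in> V"
    and i: "S ((h ^^ i) x) y" and j: "S ((h ^^ j) y) z"
    using assms unfolding joined_def by blast
  have "S ((h ^^ j) ((h ^^ i) x)) ((h ^^ j) y)"
    using i S_funpow_h_iff funpow_h_in_V x y by blast
  then have "S ((h ^^ (j + i)) x) z"
    using S_trans[OF _ j] by (simp add: funpow_add)
  then show ?thesis
    unfolding joined_def using x z by blast
qed

lemma joined_if_S: "S x y \<Longrightarrow> joined x y"
  unfolding joined_def using S_in_V by (auto intro: exI[of _ 0])

lemma joined_funpow_h: "x \<in> V \<Longrightarrow> joined x ((h ^^ i) x)"
  unfolding joined_def using funpow_h_in_V S_refl by blast

definition rep :: "'a \<Rightarrow> 'a" where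
  "rep x = (SOME r. joined r x)"

lemma joined_rep: "x \<in> V \<Longrightarrow> joined (rep x) x"
  unfolding rep_def by (rule someI[of _ x]) (rule joined_refl)

lemma rep_in_V: "x \<in> V \<Longrightarrow> rep x \<in> V"
  using joined_rep joined_def by blast

lemma rep_eq_if_joined:
  assumes "joined x y"
  shows "rep x = rep y"
proof -
  have "joined r x \<longleftrightarrow> joined r y" for r
    using joined_trans[OF _ assms] joined_trans[OF _ joined_sym[OF assms]] by blast
  then show ?thesis
    unfolding rep_def by simp
qed

lemma rep_rep: "x \<in> V \<Longrightarrow> rep (rep x) = rep x"
  using rep_eq_if_joined[OF joined_rep] .

lemma rep_funpow_h: "x \<in> V \<Longrightarrow> rep ((h ^^ i) x) = rep x"
  using rep_eq_if_joined[OF joined_funpow_h] by simp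

definition cycle_length :: "'a \<Rightarrow> nat" where
  "cycle_length r = (LEAST L. 0 < L \<and> S ((h ^^ L) r) r)"

lemma
  assumes "r \<in> V"
  shows cycle_length_pos: "0 < cycle_length r"
    and S_funpow_cycle_length: "S ((h ^^ cycle_length r) r) r"
    and cycle_length_le: "cycle_length r \<le> n"
proof -
  have period: "0 < n \<and> S ((h ^^ n) r) r"
    using period_pos h_period[OF assms] S_refl[OF assms] by simp
  show "0 < cycle_length r" "S ((h ^^ cycle_length r) r) r"
    using LeastI[of "\<lambda>L. 0 < L \<and> S ((h ^^ L) r) r", OF period]
    unfolding cycle_length_def by auto
  show "cycle_length r \<le> n"
    unfolding cycle_length_def using period by (rule Least_le)
qed

lemma not_S_funpow_less_cycle_length:
  "r \<in> V \<Longrightarrow> 0 < k \<Longrightarrow> k < cycle_length r \<Longrightarrow> \<not> S ((h ^^ k) r) r"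
  unfolding cycle_length_def using not_less_Least by blast

lemma S_funpow_mult_cycle_length:
  assumes "r \<in> V"
  shows "S ((h ^^ (k * cycle_length r)) r) r"
proof (induct k)
  case 0
  then show ?case
    using S_refl assms by simp
next
  case (Suc k)
  have "S ((h ^^ cycle_length r) ((h ^^ (k * cycle_length r)) r)) ((h ^^ cycle_length r) r)"
    using Suc S_funpow_h_iff funpow_h_in_V assms by blast
  then have "S ((h ^^ (Suc k * cycle_length r)) r) ((h ^^ cycle_length r) r)"
    by (simp add: funpow_add)
  then show ?case
    using S_trans S_funpow_cycle_length[OF assms] by blast
qed

lemma S_funpow_mod_cycle_length:
  assumes "r \<in> V"
  shows "S ((h ^^ j) r) ((h ^^ (j mod cycle_length r)) r)"
proof -
  define L where "L = cycle_length r"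
  have "(h ^^ j) r = (h ^^ (j mod L)) ((h ^^ (j div L * L)) r)"
    by (simp flip: funpow_add comp_apply[of "h ^^ _" "h ^^ _"])
  moreover have "S ((h ^^ (j mod L)) ((h ^^ (j div L * L)) r)) ((h ^^ (j mod L)) r)"
    using S_funpow_mult_cycle_length[OF assms] S_funpow_h_iff funpow_h_in_V assms
    unfolding L_def by blast
  ultimately show ?thesis
    unfolding L_def by simp
qed

lemma S_funpow_inj:
  assumes r: "r \<in> V" and "j < cycle_length r" and "k < cycle_length r"
    and "S ((h ^^ j) r) ((h ^^ k) r)"
  shows "j = k"
proof (rule ccontr)
  assume "j \<noteq> k"
  then obtain a b where ab: "a < b" "b < cycle_length r" "S ((h ^^ a) r) ((h ^^ b) r)"
    using assms S_sym by (metis linorder_neqE_nat)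
  have "(h ^^ b) r = (h ^^ a) ((h ^^ (b - a)) r)"
    using ab(1) by (simp flip: funpow_add comp_apply[of "h ^^ _" "h ^^ _"])
  then have "S r ((h ^^ (b - a)) r)"
    using ab(3) S_funpow_h_iff[OF r funpow_h_in_V[OF r], of a "b - a"] by simp
  moreover have "0 < b - a" and "b - a < cycle_length r"
    using ab by auto
  ultimately show False
    using not_S_funpow_less_cycle_length[OF r] S_sym by blast
qed

definition position :: "'a \<Rightarrow> nat" where
  "position x = (LEAST j. S ((h ^^ j) (rep x)) x)"

lemma
  assumes "x \<in> V"
  shows position_less: "position x < cycle_length (rep x)"
    and S_funpow_position: "S ((h ^^ position x) (rep x)) x"
proof -
  obtain i where i: "S ((h ^^ i) (rep x)) x"
    using joined_rep[OF assms] unfolding joined_def by blast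
  show "S ((h ^^ position x) (rep x)) x"
    unfolding position_def using i by (rule LeastI)
  have "S ((h ^^ (i mod cycle_length (rep x))) (rep x)) x"
    using S_trans[OF S_sym[OF S_funpow_mod_cycle_length[OF rep_in_V[OF assms], of i]] i] .
  then have "position x \<le> i mod cycle_length (rep x)"
    unfolding position_def by (rule Least_le)
  also have "\<dots> < cycle_length (rep x)"
    using cycle_length_pos[OF rep_in_V[OF assms]] by simp
  finally show "position x < cycle_length (rep x)" .
qed

lemma position_unique:
  assumes "x \<in> V" and "j < cycle_length (rep x)" and "S ((h ^^ j) (rep x)) x"
  shows "position x = j"
  using S_funpow_inj[OF rep_in_V[OF assms(1)] assms(2) position_less[OF assms(1)]]
    S_trans[OF assms(3) S_sym[OF S_funpow_position[OF assms(1)]]] by simp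

lemma position_funpow_h:
  assumes x: "x \<in> V"
  shows "position ((h ^^ i) x) = (position x + i) mod cycle_length (rep x)"
proof -
  define r where "r = rep x"
  have r: "r \<in> V"
    using rep_in_V[OF x] r_def by simp
  have "S ((h ^^ i) ((h ^^ position x) r)) ((h ^^ i) x)"
    using S_funpow_position[OF x] S_funpow_h_iff[OF funpow_h_in_V[OF r] x] r_def by simp
  then have "S ((h ^^ (position x + i)) r) ((h ^^ i) x)"
    by (simp add: funpow_add add.commute)
  then have "S ((h ^^ ((position x + i) mod cycle_length r)) r) ((h ^^ i) x)"
    using S_trans[OF S_sym[OF S_funpow_mod_cycle_length[OF r]]] by blast
  moreover have "(position x + i) mod cycle_length r < cycle_length r"
    using cycle_length_pos[OF r] by simp
  ultimately show ?thesis
    using position_unique[OF funpow_h_in_V[OF x]] rep_funpow_h[OF x] r_def by simp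
qed

lemma
  assumes "r \<in> rep ` V" and "j < cycle_length r"
  shows rep_funpow_h_rep: "rep ((h ^^ j) r) = r"
    and position_funpow_h_rep: "position ((h ^^ j) r) = j"
proof -
  have r: "r \<in> V" "rep r = r"
    using assms(1) rep_in_V rep_rep by auto
  show "rep ((h ^^ j) r) = r"
    using rep_funpow_h[OF r(1)] r by simp
  have "position r = 0"
    using position_unique[OF r(1), of 0] cycle_length_pos[OF r(1)] r S_refl by simp
  then show "position ((h ^^ j) r) = j"
    using position_funpow_h[OF r(1)] r assms(2) by simp
qed

lemma
  assumes "S x y"
  shows rep_eq_if_S: "rep x = rep y"
    and position_eq_if_S: "position x = position y"
proof -
  have x: "x \<in> V" and y: "y \<in> V"
    using S_in_V assms by auto
  show "rep x = rep y"
    using rep_eq_if_joined joined_if_S assms by blast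
  moreover have "S ((h ^^ position x) (rep x)) y"
    using S_trans[OF S_funpow_position[OF x] assms] .
  ultimately show "position x = position y"
    using position_unique[OF y, of "position x"] position_less[OF x] by simp
qed

lemma S_if_rep_position_eq:
  assumes "x \<in> V" and "y \<in> V" and "rep x = rep y" and "position x = position y"
  shows "S x y"
  using S_trans[OF S_sym[OF S_funpow_position[OF assms(1)]]] S_funpow_position[OF assms(2)] assms(3,4)
  by simp

text \<open>The edge is moved by \<open>h ^^ (n * i - i)\<close>, the inverse of \<open>h ^^ i\<close> on \<open>V\<close>, to an edge at a
  vertex \<open>S\<close>-related to \<open>rep x\<close>.\<close>

lemma neighbour_of_rep:
  assumes x: "x \<in> V" and y: "y \<in> V" and "{x, y} \<in> E"
  shows "\<exists>w\<in>V. {rep x, w} \<in> E \<and> S ((h ^^ position x) w) y"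
proof -
  define r i where "r = rep x" and "i = position x"
  define k where "k = n * i - i"
  have r: "r \<in> V"
    using rep_in_V[OF x] r_def by simp
  have "S ((h ^^ k) ((h ^^ i) r)) ((h ^^ k) x)"
    using S_funpow_position[OF x] S_funpow_h_iff[OF funpow_h_in_V[OF r] x] r_def i_def by simp
  then have "S r ((h ^^ k) x)"
    using funpow_h_inverse_left[OF r] k_def by simp
  moreover have "{(h ^^ k) x, (h ^^ k) y} \<in> E"
    using edge_funpow_h_iff[OF x y] assms(3) by simp
  ultimately obtain w where w: "w \<in> V" "{r, w} \<in> E" "S w ((h ^^ k) y)"
    using S_neighbour funpow_h_in_V[OF y] by blast
  have "S ((h ^^ i) w) ((h ^^ i) ((h ^^ k) y))"
    using w(3) S_funpow_h_iff[OF w(1) funpow_h_in_V[OF y]] by simp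
  then have "S ((h ^^ i) w) y"
    using funpow_h_inverse_right[OF y] k_def by simp
  then show ?thesis
    using w r_def i_def by blast
qed

text \<open>Cut points \<open>cuts r \<subseteq> {0..<cycle_length r}\<close>, always containing \<open>0\<close>, split the cycle of
  \<open>S\<close>-classes \<open>(h ^^ j) r\<close> into arcs between consecutive cut points; each arc is a part.\<close>

definition part_label :: "('a \<Rightarrow> nat set) \<Rightarrow> 'a \<Rightarrow> 'a \<times> nat" where
  "part_label cuts x = (rep x, floor_in (cuts (rep x)) (position x))"

definition cut_partition :: "('a \<Rightarrow> nat set) \<Rightarrow> 'a set set" where
  "cut_partition cuts = fibres V (part_label cuts)"

definition cuts_between :: "nat \<Rightarrow> ('a \<Rightarrow> nat set) \<Rightarrow> bool" where
  "cuts_between s cuts \<longleftrightarrow> (\<forall>r\<in>V.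
     dyadic_points (Suc s) (cycle_length r) \<subseteq> cuts r \<and> cuts r \<subseteq> dyadic_points s (cycle_length r))"

lemma
  assumes "cuts_between s cuts" and "r \<in> V"
  shows cuts_between_finite: "finite (cuts r)"
    and cuts_between_zero: "0 \<in> cuts r"
    and cuts_between_less: "c \<in> cuts r \<Longrightarrow> c < cycle_length r"
    and cuts_between_dvd: "c \<in> cuts r \<Longrightarrow> 2 ^ s dvd c"
    and cuts_between_dyadic: "dyadic_points (Suc s) (cycle_length r) \<subseteq> cuts r"
proof -
  have cuts: "dyadic_points (Suc s) (cycle_length r) \<subseteq> cuts r" "cuts r \<subseteq> dyadic_points s (cycle_length r)"
    using assms unfolding cuts_between_def by auto
  then show "dyadic_points (Suc s) (cycle_length r) \<subseteq> cuts r"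
    by simp
  show "finite (cuts r)"
    using cuts(2) by (rule finite_subset) (simp add: dyadic_points_def)
  show "0 \<in> cuts r"
    using cuts(1) cycle_length_pos[OF assms(2)] unfolding dyadic_points_def by auto
  show "c \<in> cuts r \<Longrightarrow> c < cycle_length r" and "c \<in> cuts r \<Longrightarrow> 2 ^ s dvd c"
    using cuts(2) unfolding dyadic_points_def by auto
qed

lemma fibre_part_label_eq_if_S: "S x y \<Longrightarrow> fibre V (part_label cuts) x = fibre V (part_label cuts) y"
  unfolding fibre_def part_label_def using rep_eq_if_S position_eq_if_S by simp

lemma adjacent_parts_cut_partition_subset:
  assumes "cuts_between s cuts" and "x0 \<in> V"
  defines "c \<equiv> floor_in (cuts (rep x0)) (position x0)"
  shows "adjacent_parts E (cut_partition cuts) (fibre V (part_label cuts) x0)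
    \<subseteq> (\<Union>w\<in>{w \<in> V. {rep x0, w} \<in> E}.
          (\<lambda>i. fibre V (part_label cuts) ((h ^^ i) w)) ` {c..<c + 2 * 2 ^ s})"
proof
  fix W assume "W \<in> adjacent_parts E (cut_partition cuts) (fibre V (part_label cuts) x0)"
  then obtain x y where x: "x \<in> fibre V (part_label cuts) x0" and y: "y \<in> W"
    and W: "W \<in> cut_partition cuts" and xy: "{x, y} \<in> E"
    unfolding adjacent_parts_def by auto
  obtain y0 where "y0 \<in> V" and W_y0: "W = fibre V (part_label cuts) y0"
    using W unfolding cut_partition_def fibres_def by blast
  then have W_y: "W = fibre V (part_label cuts) y"
    using fibre_eq[of y V "part_label cuts" y0] y by simp
  have "x \<in> V" and "y \<in> V"
    using x y W_y0 unfolding fibre_def by auto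
  define r where "r = rep x0"
  have r: "r \<in> V"
    using rep_in_V[OF assms(2)] r_def by simp
  note finite = cuts_between_finite[OF assms(1) r] and zero = cuts_between_zero[OF assms(1) r]
  have rep_x: "rep x = r" and floor_x: "floor_in (cuts r) (position x) = c"
    using x unfolding fibre_def part_label_def r_def c_def by auto
  have "c \<le> position x"
    using floor_in_le[OF finite zero, of "position x"] floor_x by simp
  moreover have "position x < c + 2 * 2 ^ s"
    using floor_in_gap[OF finite zero cuts_between_dyadic[OF assms(1) r] position_less[OF \<open>x \<in> V\<close>, unfolded rep_x]]
      floor_x by simp
  ultimately have i: "position x \<in> {c..<c + 2 * 2 ^ s}"
    by simp
  obtain w where w: "w \<in> V" "{r, w} \<in> E" "S ((h ^^ position x) w) y"
    using neighbour_of_rep[OF \<open>x \<in> V\<close> \<open>y \<in> V\<close> xy] rep_x by blast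
  have "W = fibre V (part_label cuts) ((h ^^ position x) w)"
    using W_y fibre_part_label_eq_if_S[OF w(3)] by simp
  then show "W \<in> (\<Union>w\<in>{w \<in> V. {rep x0, w} \<in> E}.
      (\<lambda>i. fibre V (part_label cuts) ((h ^^ i) w)) ` {c..<c + 2 * 2 ^ s})"
    using w(1,2) i unfolding r_def by blast
qed

lemma card_parts_along_window_le:
  assumes "cuts_between s cuts" and "w \<in> V"
  shows "card ((\<lambda>i. fibre V (part_label cuts) ((h ^^ i) w)) ` {c..<c + 2 * 2 ^ s}) \<le> 4"
proof -
  define q :: nat where "q = 2 ^ s"
  define r where "r = rep w"
  have "0 < q"
    unfolding q_def by simp
  have r: "r \<in> V"
    using rep_in_V[OF assms(2)] r_def by simp
  define part where "part t = {y \<in> V. part_label cuts y = (r, floor_in (cuts r) (q * t))}" for t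
  define g where "g k = (k mod cycle_length r) div q" for k
  have "(\<lambda>i. fibre V (part_label cuts) ((h ^^ i) w)) ` {c..<c + 2 * q}
      \<subseteq> part ` g ` {position w + c..<position w + c + 2 * q}"
  proof
    fix z assume "z \<in> (\<lambda>i. fibre V (part_label cuts) ((h ^^ i) w)) ` {c..<c + 2 * q}"
    then obtain i where i: "i \<in> {c..<c + 2 * q}" "z = fibre V (part_label cuts) ((h ^^ i) w)"
      by blast
    have "part_label cuts ((h ^^ i) w)
        = (r, floor_in (cuts r) ((position w + i) mod cycle_length r))"
      unfolding part_label_def using rep_funpow_h[OF assms(2)] position_funpow_h[OF assms(2)] r_def
      by simp
    also have "\<dots> = (r, floor_in (cuts r) (q * g (position w + i)))"
      unfolding g_def
      using floor_in_div_mult[OF cuts_between_finite[OF assms(1) r] cuts_between_zero[OF assms(1) r]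
          cuts_between_dvd[OF assms(1) r, folded q_def] \<open>0 < q\<close>]
      by simp
    finally have "z = part (g (position w + i))"
      using i(2) unfolding fibre_def part_def by simp
    moreover have "position w + i \<in> {position w + c..<position w + c + 2 * q}"
      using i(1) by simp
    ultimately show "z \<in> part ` g ` {position w + c..<position w + c + 2 * q}"
      by blast
  qed
  then have "card ((\<lambda>i. fibre V (part_label cuts) ((h ^^ i) w)) ` {c..<c + 2 * q})
      \<le> card (part ` g ` {position w + c..<position w + c + 2 * q})"
    by (intro card_mono) auto
  also have "\<dots> \<le> card (g ` {position w + c..<position w + c + 2 * q})"
    by (rule card_image_le) simp
  also have "\<dots> \<le> 4"
    unfolding g_def using card_cyclic_window_le[OF cycle_length_pos[OF r] \<open>0 < q\<close>] by simp
  finally show ?thesis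
    unfolding q_def .
qed

lemma adjacency_bounded_cut_partition:
  assumes "cuts_between s cuts"
  shows "adjacency_bounded E (4 * D) (cut_partition cuts)"
  unfolding adjacency_bounded_def
proof (intro conjI ballI)
  show "finite (cut_partition cuts)"
    unfolding cut_partition_def fibres_def using finite_V by simp
  fix U assume "U \<in> cut_partition cuts"
  then obtain x0 where x0: "x0 \<in> V" "U = fibre V (part_label cuts) x0"
    unfolding cut_partition_def fibres_def by blast
  define c where "c = floor_in (cuts (rep x0)) (position x0)"
  define N where "N = {w \<in> V. {rep x0, w} \<in> E}"
  define window where
    "window w = (\<lambda>i. fibre V (part_label cuts) ((h ^^ i) w)) ` {c..<c + 2 * 2 ^ s}" for w
  have "finite N"
    unfolding N_def using finite_V by simp
  have "card (adjacent_parts E (cut_partition cuts) U) \<le> card (\<Union>w\<in>N. window w)"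
    using adjacent_parts_cut_partition_subset[OF assms x0(1)] x0(2) \<open>finite N\<close>
    unfolding N_def window_def c_def by (intro card_mono) auto
  also have "\<dots> \<le> (\<Sum>w\<in>N. card (window w))"
    by (rule card_UN_le[OF \<open>finite N\<close>])
  also have "\<dots> \<le> (\<Sum>w\<in>N. 4)"
    using card_parts_along_window_le[OF assms] unfolding N_def window_def by (intro sum_mono) simp
  also have "\<dots> \<le> 4 * D"
    using degree_le[OF rep_in_V[OF x0(1)]] unfolding degree_def N_def by simp
  finally show "card (adjacent_parts E (cut_partition cuts) U) \<le> 4 * D" .
qed

lemma merge_step_remove_cut:
  assumes "cuts_between s cuts" and "r \<in> rep ` V" and "c \<in> cuts r" and "c \<noteq> 0"
  shows "merge_step (cut_partition cuts) (cut_partition (cuts(r := cuts r - {c})))"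
proof -
  have r: "r \<in> V" "rep r = r"
    using assms(2) rep_in_V rep_rep by auto
  note finite = cuts_between_finite[OF assms(1) r(1)] and zero = cuts_between_zero[OF assms(1) r(1)]
  define p where "p = floor_in (cuts r) (c - 1)"
  have "p \<in> cuts r" and "p < c"
    using floor_in_mem[OF finite zero] floor_in_le[OF finite zero, of "c - 1"] assms(4)
    unfolding p_def by auto
  have "c < cycle_length r"
    using cuts_between_less[OF assms(1) r(1) assms(3)] .
  then have label_c: "part_label cuts ((h ^^ c) r) = (r, c)"
    unfolding part_label_def
    using rep_funpow_h_rep[OF assms(2)] position_funpow_h_rep[OF assms(2)]
      floor_in_self[OF finite zero assms(3)] by simp
  have label_p: "part_label cuts ((h ^^ p) r) = (r, p)"
    unfolding part_label_def using \<open>p < c\<close> \<open>c < cycle_length r\<close>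
    using rep_funpow_h_rep[OF assms(2)] position_funpow_h_rep[OF assms(2)]
      floor_in_self[OF finite zero \<open>p \<in> cuts r\<close>] by simp
  show ?thesis
    unfolding cut_partition_def
  proof (rule merge_step_fibres[OF funpow_h_in_V[OF r(1)] funpow_h_in_V[OF r(1)]])
    show "part_label cuts ((h ^^ p) r) \<noteq> part_label cuts ((h ^^ c) r)"
      using label_p label_c \<open>p < c\<close> by simp
    fix x assume "x \<in> V"
    show "part_label (cuts(r := cuts r - {c})) x = (if part_label cuts x = part_label cuts ((h ^^ c) r)
        then part_label cuts ((h ^^ p) r) else part_label cuts x)"
    proof (cases "rep x = r")
      case True
      then show ?thesis
        using floor_in_remove[OF finite zero assms(4), of "position x"] label_c label_p
        unfolding part_label_def p_def by auto
    next
      case False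
      then show ?thesis
        using label_c label_p unfolding part_label_def by auto
    qed
  qed
qed

definition surplus_cuts :: "nat \<Rightarrow> ('a \<Rightarrow> nat set) \<Rightarrow> ('a \<times> nat) set" where
  "surplus_cuts s cuts =
     {(r, c). r \<in> rep ` V \<and> c \<in> cuts r \<and> c \<notin> dyadic_points (Suc s) (cycle_length r)}"

lemma finite_surplus_cuts:
  assumes "cuts_between s cuts"
  shows "finite (surplus_cuts s cuts)"
proof (rule finite_subset)
  show "surplus_cuts s cuts \<subseteq> rep ` V \<times> {..<n}"
    unfolding surplus_cuts_def
    using cuts_between_less[OF assms] cycle_length_le rep_in_V by fastforce
  show "finite (rep ` V \<times> {..<n})"
    using finite_V by simp
qed

lemma cut_partition_eq_if_no_surplus_cuts:
  assumes "cuts_between s cuts" and "surplus_cuts s cuts = {}"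
  shows "cut_partition cuts = cut_partition (\<lambda>r. dyadic_points (Suc s) (cycle_length r))"
  unfolding cut_partition_def
proof (rule fibres_cong)
  fix x assume "x \<in> V"
  then have "cuts (rep x) = dyadic_points (Suc s) (cycle_length (rep x))"
    using assms cuts_between_dyadic[OF assms(1) rep_in_V] unfolding surplus_cuts_def by blast
  then show "part_label cuts x = part_label (\<lambda>r. dyadic_points (Suc s) (cycle_length r)) x"
    unfolding part_label_def by simp
qed

lemma
  assumes "cuts_between s cuts" and "(r, c) \<in> surplus_cuts s cuts"
  shows cuts_between_remove_surplus_cut: "cuts_between s (cuts(r := cuts r - {c}))"
    and surplus_cuts_remove: "surplus_cuts s (cuts(r := cuts r - {c})) = surplus_cuts s cuts - {(r, c)}"
    and bounded_merge_remove_surplus_cut: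
      "bounded_merge E (4 * D) (cut_partition cuts) (cut_partition (cuts(r := cuts r - {c})))"
proof -
  have r: "r \<in> rep ` V" and c: "c \<in> cuts r" "c \<notin> dyadic_points (Suc s) (cycle_length r)"
    using assms(2) unfolding surplus_cuts_def by auto
  show "cuts_between s (cuts(r := cuts r - {c}))"
    using assms(1) c(2) unfolding cuts_between_def by auto
  show "surplus_cuts s (cuts(r := cuts r - {c})) = surplus_cuts s cuts - {(r, c)}"
    unfolding surplus_cuts_def by (auto split: if_splits)
  have "0 < cycle_length r"
    using cycle_length_pos r rep_in_V by blast
  then have "c \<noteq> 0"
    using c(2) unfolding dyadic_points_def by (cases c) auto
  then show "bounded_merge E (4 * D) (cut_partition cuts) (cut_partition (cuts(r := cuts r - {c})))"
    unfolding bounded_merge_def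
    using merge_step_remove_cut[OF assms(1) r c(1)] adjacency_bounded_cut_partition assms(1)
      \<open>cuts_between s (cuts(r := cuts r - {c}))\<close> by blast
qed

lemma cut_partition_coarsening:
  assumes "cuts_between s cuts"
  shows "(bounded_merge E (4 * D))\<^sup>*\<^sup>* (cut_partition cuts)
           (cut_partition (\<lambda>r. dyadic_points (Suc s) (cycle_length r)))"
  using assms
proof (induction "card (surplus_cuts s cuts)" arbitrary: cuts rule: less_induct)
  case less
  show ?case
  proof (cases "surplus_cuts s cuts = {}")
    case True
    then show ?thesis
      using cut_partition_eq_if_no_surplus_cuts[OF less.prems] by simp
  next
    case False
    then obtain r c where rc: "(r, c) \<in> surplus_cuts s cuts"
      by auto
    have "card (surplus_cuts s (cuts(r := cuts r - {c}))) < card (surplus_cuts s cuts)"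
      unfolding surplus_cuts_remove[OF less.prems rc]
      using card_Diff1_less[OF finite_surplus_cuts[OF less.prems] rc] .
    then have "(bounded_merge E (4 * D))\<^sup>*\<^sup>* (cut_partition (cuts(r := cuts r - {c})))
        (cut_partition (\<lambda>r. dyadic_points (Suc s) (cycle_length r)))"
      using less.hyps cuts_between_remove_surplus_cut[OF less.prems rc] by blast
    with bounded_merge_remove_surplus_cut[OF less.prems rc] show ?thesis
      by (rule converse_rtranclp_into_rtranclp)
  qed
qed

lemma cut_partition_dyadic_chain:
  "(bounded_merge E (4 * D))\<^sup>*\<^sup>* (cut_partition (\<lambda>r. dyadic_points 0 (cycle_length r)))
     (cut_partition (\<lambda>r. dyadic_points s (cycle_length r)))"
proof (induct s)
  case (Suc s)
  have "cuts_between s (\<lambda>r. dyadic_points s (cycle_length r))"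
    unfolding cuts_between_def using dyadic_points_Suc_subset by blast
  then show ?case
    by (rule rtranclp_trans[OF Suc cut_partition_coarsening])
qed simp

lemma cut_partition_dyadic_0:
  "cut_partition (\<lambda>r. dyadic_points 0 (cycle_length r)) = (\<lambda>x. {y. S x y}) ` V"
proof -
  have label: "part_label (\<lambda>r. dyadic_points 0 (cycle_length r)) x = (rep x, position x)"
    if "x \<in> V" for x
  proof -
    have "floor_in (dyadic_points 0 (cycle_length (rep x))) (position x) = position x"
      using position_less[OF that] by (intro floor_in_self) (auto simp: dyadic_points_def)
    then show ?thesis
      unfolding part_label_def by simp
  qed
  have "fibre V (part_label (\<lambda>r. dyadic_points 0 (cycle_length r))) x = {y. S x y}"
    if "x \<in> V" for x
  proof (intro equalityI subsetI)
    fix y assume "y \<in> fibre V (part_label (\<lambda>r. dyadic_points 0 (cycle_length r))) x"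
    then have "y \<in> V" and "rep y = rep x" and "position y = position x"
      using label that unfolding fibre_def by auto
    then show "y \<in> {y. S x y}"
      using S_if_rep_position_eq[OF that] by simp
  next
    fix y assume "y \<in> {y. S x y}"
    then have "S x y" and "y \<in> V"
      using S_in_V by auto
    then show "y \<in> fibre V (part_label (\<lambda>r. dyadic_points 0 (cycle_length r))) x"
      using fibre_part_label_eq_if_S[of x y] unfolding fibre_def by simp
  qed
  then show ?thesis
    unfolding cut_partition_def fibres_def by (intro image_cong) simp_all
qed

lemma cut_partition_dyadic_n:
  "cut_partition (\<lambda>r. dyadic_points n (cycle_length r)) = (\<lambda>x. {y. joined x y}) ` V"
proof -
  have "dyadic_points n (cycle_length r) = {0}" if "r \<in> V" for r
  proof -
    have "cycle_length r < 2 ^ n"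
      using cycle_length_le[OF that] less_exp[of n] by linarith
    then show ?thesis
      using cycle_length_pos[OF that] unfolding dyadic_points_def by (auto dest: dvd_imp_le)
  qed
  then have "{c \<in> dyadic_points n (cycle_length (rep x)). c \<le> position x} = {0}" if "x \<in> V" for x
    using rep_in_V[OF that] by auto
  then have label: "part_label (\<lambda>r. dyadic_points n (cycle_length r)) x = (rep x, 0)"
    if "x \<in> V" for x
    using that unfolding part_label_def floor_in_def by simp
  have "fibre V (part_label (\<lambda>r. dyadic_points n (cycle_length r))) x = {y. joined x y}"
    if "x \<in> V" for x
  proof (intro equalityI subsetI)
    fix y assume "y \<in> fibre V (part_label (\<lambda>r. dyadic_points n (cycle_length r))) x"
    then have "y \<in> V" and "rep y = rep x"
      using label that unfolding fibre_def by auto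
    then show "y \<in> {y. joined x y}"
      using joined_trans[OF joined_sym[OF joined_rep[OF that]] joined_rep[OF \<open>y \<in> V\<close>, unfolded \<open>rep y = rep x\<close>]]
      by simp
  next
    fix y assume "y \<in> {y. joined x y}"
    then have "joined x y" and "y \<in> V"
      unfolding joined_def by auto
    then show "y \<in> fibre V (part_label (\<lambda>r. dyadic_points n (cycle_length r))) x"
      using label that rep_eq_if_joined unfolding fibre_def by simp
  qed
  then show ?thesis
    unfolding cut_partition_def fibres_def by (intro image_cong) simp_all
qed

theorem bounded_merges_to_joined_classes:
  "(bounded_merge E (4 * D))\<^sup>*\<^sup>* ((\<lambda>x. {y. S x y}) ` V) ((\<lambda>x. {y. joined x y}) ` V)"
  using cut_partition_dyadic_chain[of n] unfolding cut_partition_dyadic_0 cut_partition_dyadic_n .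

end

section \<open>Adjoining a normalising element\<close>

definition adjoin :: "('a, 'b) monoid_scheme \<Rightarrow> 'a set \<Rightarrow> 'a \<Rightarrow> 'a set" where
  "adjoin G M h = {m \<otimes>\<^bsub>G\<^esub> h [^]\<^bsub>G\<^esub> (i::nat) | m i. m \<in> M}"

context group
begin

lemma conj_mem_if_derived_set_subset:
  assumes "subgroup H G" and "subgroup M G" and "M \<subseteq> H" and "derived_set G H \<subseteq> M"
    and "h \<in> H" and "m \<in> M"
  shows "h \<otimes> m \<otimes> inv h \<in> M"
proof -
  have carrier: "h \<in> carrier G" "m \<in> carrier G"
    using subgroup.mem_carrier[OF assms(1,5)] subgroup.mem_carrier[OF assms(2,6)] by auto
  have "inv m \<in> H"
    using subgroup.m_inv_closed[OF assms(1) subsetD[OF assms(3,6)]] .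
  then have "inv m \<otimes> h \<otimes> inv (inv m) \<otimes> inv h \<in> derived_set G H"
    by (intro UN_I[OF \<open>inv m \<in> H\<close>] UN_I[OF assms(5)]) simp
  then have "inv m \<otimes> h \<otimes> m \<otimes> inv h \<in> M"
    using subsetD[OF assms(4)] carrier by simp
  moreover have "h \<otimes> m \<otimes> inv h = m \<otimes> (inv m \<otimes> h \<otimes> m \<otimes> inv h)"
    using carrier by (simp add: m_assoc[symmetric])
  ultimately show ?thesis
    using subgroup.m_closed[OF assms(2,6)] by simp
qed

lemma pow_mult_eq_mult_pow:
  assumes "subgroup M G" and "h \<in> carrier G" and "\<And>m. m \<in> M \<Longrightarrow> h \<otimes> m \<otimes> inv h \<in> M"
    and "m \<in> M"
  shows "\<exists>m'\<in>M. h [^] (j::nat) \<otimes> m = m' \<otimes> h [^] j"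
  using assms(4)
proof (induct j arbitrary: m)
  case 0
  then show ?case
    using subgroup.mem_carrier[OF assms(1)] by (intro bexI[of _ m]) auto
next
  case (Suc j)
  define m1 where "m1 = h \<otimes> m \<otimes> inv h"
  have m: "m \<in> carrier G" and m1: "m1 \<in> M" "m1 \<in> carrier G"
    using Suc(2) assms(3) subgroup.mem_carrier[OF assms(1)] unfolding m1_def by auto
  have hm: "h \<otimes> m = m1 \<otimes> h"
    unfolding m1_def using assms(2) m by (simp add: m_assoc)
  obtain m2 where m2: "m2 \<in> M" "h [^] j \<otimes> m1 = m2 \<otimes> h [^] j"
    using Suc(1)[OF m1(1)] by blast
  have "m2 \<in> carrier G"
    using m2(1) subgroup.mem_carrier[OF assms(1)] by blast
  have "h [^] Suc j \<otimes> m = h [^] j \<otimes> (h \<otimes> m)"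
    using assms(2) m by (simp add: m_assoc)
  also have "\<dots> = (h [^] j \<otimes> m1) \<otimes> h"
    unfolding hm using assms(2) m1(2) by (simp add: m_assoc)
  also have "\<dots> = m2 \<otimes> h [^] Suc j"
    unfolding m2(2) using assms(2) \<open>m2 \<in> carrier G\<close> by (simp add: m_assoc)
  finally show ?case
    using m2(1) by blast
qed

lemma inv_pow_eq_pow_ord:
  assumes "finite (carrier G)" and "h \<in> carrier G"
  shows "inv (h [^] (i::nat)) = h [^] (i * (ord h - 1))"
proof (rule inv_equality)
  have "ord h \<ge> 1"
    using ord_ge_1[OF assms] .
  then have "i * (ord h - 1) + i = ord h * i"
    by (simp add: algebra_simps)
  then have "h [^] (i * (ord h - 1)) \<otimes> h [^] i = h [^] (ord h * i)"
    using assms(2) by (simp add: nat_pow_mult)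
  also have "\<dots> = \<one>"
    using assms(2) by (simp add: nat_pow_pow[symmetric])
  finally show "h [^] (i * (ord h - 1)) \<otimes> h [^] i = \<one>" .
qed (use assms(2) in simp_all)

context
  fixes M h
  assumes M: "subgroup M G" and h: "h \<in> carrier G"
    and normalises: "\<And>m. m \<in> M \<Longrightarrow> h \<otimes> m \<otimes> inv h \<in> M"
begin

lemma inv_mem_adjoin:
  assumes "finite (carrier G)" and "a \<in> adjoin G M h"
  shows "inv a \<in> adjoin G M h"
proof -
  obtain m i where a: "m \<in> M" "a = m \<otimes> h [^] (i::nat)"
    using assms(2) unfolding adjoin_def by blast
  have "m \<in> carrier G"
    using a(1) subgroup.mem_carrier[OF M] by blast
  then have "inv a = h [^] (i * (ord h - 1)) \<otimes> inv m"
    using a(2) h inv_pow_eq_pow_ord[OF assms(1) h] by (simp add: inv_mult_group)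
  moreover obtain m' where "m' \<in> M" "h [^] (i * (ord h - 1)) \<otimes> inv m = m' \<otimes> h [^] (i * (ord h - 1))"
    using pow_mult_eq_mult_pow[OF M h normalises subgroup.m_inv_closed[OF M a(1)]] by blast
  ultimately show ?thesis
    unfolding adjoin_def by auto
qed

lemma mult_mem_adjoin:
  assumes "a \<in> adjoin G M h" and "b \<in> adjoin G M h"
  shows "a \<otimes> b \<in> adjoin G M h"
proof -
  obtain m1 i m2 j where a: "m1 \<in> M" "a = m1 \<otimes> h [^] (i::nat)"
    and b: "m2 \<in> M" "b = m2 \<otimes> h [^] (j::nat)"
    using assms unfolding adjoin_def by blast
  obtain m' where m': "m' \<in> M" "h [^] i \<otimes> m2 = m' \<otimes> h [^] i"
    using pow_mult_eq_mult_pow[OF M h normalises b(1)] by blast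
  have carrier: "m1 \<in> carrier G" "m2 \<in> carrier G" "m' \<in> carrier G"
    using a(1) b(1) m'(1) subgroup.mem_carrier[OF M] by auto
  have "a \<otimes> b = m1 \<otimes> (h [^] i \<otimes> m2) \<otimes> h [^] j"
    using a b carrier h by (simp add: m_assoc)
  also have "\<dots> = (m1 \<otimes> m') \<otimes> h [^] (i + j)"
    unfolding m'(2) using carrier h by (simp add: m_assoc nat_pow_mult)
  finally show ?thesis
    unfolding adjoin_def using subgroup.m_closed[OF M a(1) m'(1)] by blast
qed

lemma adjoin_subgroup:
  assumes "finite (carrier G)"
  shows "subgroup (adjoin G M h) G"
proof (rule subgroupI)
  show "adjoin G M h \<subseteq> carrier G"
    unfolding adjoin_def using subgroup.mem_carrier[OF M] h by auto
  show "adjoin G M h \<noteq> {}"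
    unfolding adjoin_def using subgroup.one_closed[OF M] by auto
  show "inv a \<in> adjoin G M h" if "a \<in> adjoin G M h" for a
    using inv_mem_adjoin[OF assms that] .
  show "a \<otimes> b \<in> adjoin G M h" if "a \<in> adjoin G M h" and "b \<in> adjoin G M h" for a b
    using mult_mem_adjoin[OF that] .
qed

end

lemma subset_adjoin:
  assumes "subgroup M G" and "h \<in> carrier G"
  shows "M \<subseteq> adjoin G M h"
proof
  fix m assume "m \<in> M"
  then have "m = m \<otimes> h [^] (0::nat)"
    using subgroup.mem_carrier[OF assms(1)] by simp
  with \<open>m \<in> M\<close> show "m \<in> adjoin G M h"
    unfolding adjoin_def by blast
qed

lemma mem_adjoin:
  assumes "subgroup M G" and "h \<in> carrier G"
  shows "h \<in> adjoin G M h"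
proof -
  have "h = \<one> \<otimes> h [^] (1::nat)"
    using assms(2) by simp
  then show ?thesis
    unfolding adjoin_def using subgroup.one_closed[OF assms(1)] by blast
qed

lemma adjoin_subset:
  assumes "subgroup H G" and "M \<subseteq> H" and "h \<in> H"
  shows "adjoin G M h \<subseteq> H"
proof
  fix x assume "x \<in> adjoin G M h"
  then obtain m i where "m \<in> M" "x = m \<otimes> h [^] (i::nat)"
    unfolding adjoin_def by blast
  moreover have "h [^] i \<in> H"
    using subgroup_int_pow_closed[OF assms(1,3), of "int i"] by (simp add: int_pow_int)
  ultimately show "x \<in> H"
    using subgroup.m_closed[OF assms(1)] assms(2) by blast
qed


lemma adjoin_between:
  assumes "finite (carrier G)" and "subgroup H G" and "subgroup M G" and "M \<subseteq> H"
    and "derived_set G H \<subseteq> M" and "h \<in> H"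
  shows "subgroup (adjoin G M h) G" and "M \<subseteq> adjoin G M h" and "h \<in> adjoin G M h"
    and "adjoin G M h \<subseteq> H"
proof -
  have "h \<in> carrier G"
    using subgroup.mem_carrier[OF assms(2,6)] .
  then show "subgroup (adjoin G M h) G"
    using adjoin_subgroup[OF assms(3) _ conj_mem_if_derived_set_subset[OF assms(2-6)] assms(1)]
    by blast
  show "M \<subseteq> adjoin G M h" and "h \<in> adjoin G M h"
    using subset_adjoin mem_adjoin assms(3) \<open>h \<in> carrier G\<close> by auto
  show "adjoin G M h \<subseteq> H"
    using adjoin_subset[OF assms(2,4,6)] .
qed
end

section \<open>Solvable groups of automorphisms\<close>

locale aut_group =
  fixes V :: "'a set" and E :: "'a set set" and \<Gamma> :: "('a \<Rightarrow> 'a) set"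
  assumes finite_V: "finite V"
    and subgroup_\<Gamma>: "subgroup \<Gamma> (BijGroup V)"
    and \<Gamma>_Aut: "\<Gamma> \<subseteq> Aut V E"
begin

definition G :: "('a \<Rightarrow> 'a) monoid" where
  "G = (BijGroup V)\<lparr>carrier := \<Gamma>\<rparr>"

sublocale grp: group G
  unfolding G_def by (rule subgroup.subgroup_is_group[OF subgroup_\<Gamma> group_BijGroup])

lemma carrier_G [simp]: "carrier G = \<Gamma>"
  by (simp add: G_def)

lemma Bij_if_mem_\<Gamma>: "g \<in> \<Gamma> \<Longrightarrow> g \<in> Bij V"
  using subgroup.subset[OF subgroup_\<Gamma>] by (auto simp: BijGroup_def)

lemma finite_\<Gamma>: "finite \<Gamma>"
proof (rule finite_subset)
  show "\<Gamma> \<subseteq> PiE V (\<lambda>_. V)"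
    using Bij_if_mem_\<Gamma> unfolding Bij_def PiE_def using bij_betwE by fastforce
  show "finite (PiE V (\<lambda>_. V))"
    using finite_V by (simp add: finite_PiE)
qed

lemma \<Gamma>_closed [simp]:
  "a \<in> \<Gamma> \<Longrightarrow> b \<in> \<Gamma> \<Longrightarrow> a \<otimes>\<^bsub>G\<^esub> b \<in> \<Gamma>"
  "a \<in> \<Gamma> \<Longrightarrow> inv\<^bsub>G\<^esub> a \<in> \<Gamma>"
  "a \<in> \<Gamma> \<Longrightarrow> a [^]\<^bsub>G\<^esub> (i::nat) \<in> \<Gamma>"
  using grp.m_closed[of a b] grp.inv_closed[of a] grp.nat_pow_closed[of a i] by auto

lemma apply_in_V: "g \<in> \<Gamma> \<Longrightarrow> x \<in> V \<Longrightarrow> g x \<in> V"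
  using Bij_if_mem_\<Gamma> Bij_imp_funcset by blast

lemma mult_apply: "a \<in> \<Gamma> \<Longrightarrow> b \<in> \<Gamma> \<Longrightarrow> x \<in> V \<Longrightarrow> (a \<otimes>\<^bsub>G\<^esub> b) x = a (b x)"
  using Bij_if_mem_\<Gamma> by (simp add: G_def BijGroup_def compose_def)

lemma one_apply: "x \<in> V \<Longrightarrow> \<one>\<^bsub>G\<^esub> x = x"
  by (simp add: G_def BijGroup_def)

lemma pow_apply: "g \<in> \<Gamma> \<Longrightarrow> x \<in> V \<Longrightarrow> (g [^]\<^bsub>G\<^esub> (i::nat)) x = (g ^^ i) x"
proof (induct i arbitrary: x)
  case 0
  then show ?case
    using one_apply by simp
next
  case (Suc i)
  then have "(g [^]\<^bsub>G\<^esub> Suc i) x = (g [^]\<^bsub>G\<^esub> i) (g x)"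
    using mult_apply[of "g [^]\<^bsub>G\<^esub> i" g x] grp.nat_pow_closed[of g i] by simp
  also have "\<dots> = (g ^^ i) (g x)"
    using Suc apply_in_V by simp
  finally show ?case
    by (simp only: funpow_Suc_right comp_apply)
qed

lemma inv_apply_apply: "g \<in> \<Gamma> \<Longrightarrow> x \<in> V \<Longrightarrow> (inv\<^bsub>G\<^esub> g) (g x) = x"
  using mult_apply[of "inv\<^bsub>G\<^esub> g" g x] one_apply grp.inv_closed[of g] grp.l_inv[of g] by simp

lemma apply_inv_apply: "g \<in> \<Gamma> \<Longrightarrow> x \<in> V \<Longrightarrow> g ((inv\<^bsub>G\<^esub> g) x) = x"
  using mult_apply[of g "inv\<^bsub>G\<^esub> g" x] one_apply grp.inv_closed[of g] grp.r_inv[of g] by simp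

lemma edge_apply_iff: "g \<in> \<Gamma> \<Longrightarrow> x \<in> V \<Longrightarrow> y \<in> V \<Longrightarrow> {g x, g y} \<in> E \<longleftrightarrow> {x, y} \<in> E"
  using \<Gamma>_Aut unfolding Aut_def by blast

lemma degree_le_max_degree: "v \<in> V \<Longrightarrow> degree V E v \<le> max_degree V E"
  unfolding max_degree_def using finite_V by (intro Max_ge) auto

definition orbit_rel :: "('a \<Rightarrow> 'a) set \<Rightarrow> 'a \<Rightarrow> 'a \<Rightarrow> bool" where
  "orbit_rel M x y \<longleftrightarrow> x \<in> V \<and> y \<in> V \<and> (\<exists>g\<in>M. g x = y)"

lemma orbit_partition_eq_orbit_rel_classes:
  assumes "M \<subseteq> \<Gamma>"
  shows "orbit_partition V M = (\<lambda>x. {y. orbit_rel M x y}) ` V"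
proof -
  have "{y. orbit_rel M x y} = {g x | g. g \<in> M}" if "x \<in> V" for x
    unfolding orbit_rel_def using that apply_in_V assms by auto
  then show ?thesis
    unfolding orbit_partition_def by blast
qed

context
  fixes M assumes M: "subgroup M G"
begin

lemma mem_\<Gamma>_if_mem_M: "g \<in> M \<Longrightarrow> g \<in> \<Gamma>"
  using subgroup.mem_carrier[OF M] by simp

lemma orbit_rel_refl: "x \<in> V \<Longrightarrow> orbit_rel M x x"
  unfolding orbit_rel_def using subgroup.one_closed[OF M] one_apply by blast

lemma orbit_rel_sym:
  assumes "orbit_rel M x y"
  shows "orbit_rel M y x"
proof -
  obtain g where g: "x \<in> V" "y \<in> V" "g \<in> M" "g x = y"
    using assms unfolding orbit_rel_def by blast
  have "(inv\<^bsub>G\<^esub> g) y = x"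
    using inv_apply_apply[OF mem_\<Gamma>_if_mem_M[OF g(3)] g(1)] g(4) by simp
  then show ?thesis
    unfolding orbit_rel_def using g subgroup.m_inv_closed[OF M g(3)] by blast
qed

lemma orbit_rel_trans:
  assumes "orbit_rel M x y" and "orbit_rel M y z"
  shows "orbit_rel M x z"
proof -
  obtain g1 g2 where g: "x \<in> V" "z \<in> V" "g1 \<in> M" "g1 x = y" "g2 \<in> M" "g2 y = z"
    using assms unfolding orbit_rel_def by blast
  have "(g2 \<otimes>\<^bsub>G\<^esub> g1) x = z"
    using mult_apply[OF mem_\<Gamma>_if_mem_M[OF g(5)] mem_\<Gamma>_if_mem_M[OF g(3)] g(1)] g by simp
  then show ?thesis
    unfolding orbit_rel_def using g subgroup.m_closed[OF M g(5) g(3)] by blast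
qed

lemma orbit_rel_neighbour:
  assumes "orbit_rel M v x" and "{x, y} \<in> E" and "y \<in> V"
  shows "\<exists>w\<in>V. {v, w} \<in> E \<and> orbit_rel M w y"
proof -
  obtain g where g: "v \<in> V" "x \<in> V" "g \<in> M" "g v = x"
    using assms(1) unfolding orbit_rel_def by blast
  have "g \<in> \<Gamma>"
    using mem_\<Gamma>_if_mem_M[OF g(3)] .
  define w where "w = (inv\<^bsub>G\<^esub> g) y"
  have "w \<in> V"
    unfolding w_def using apply_in_V[OF \<Gamma>_closed(2)[OF \<open>g \<in> \<Gamma>\<close>] assms(3)] .
  have "{(inv\<^bsub>G\<^esub> g) x, (inv\<^bsub>G\<^esub> g) y} \<in> E"
    using edge_apply_iff[of "inv\<^bsub>G\<^esub> g" x y] \<open>g \<in> \<Gamma>\<close> g(2) assms(2,3) by simp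
  moreover have "(inv\<^bsub>G\<^esub> g) x = v"
    using inv_apply_apply[OF \<open>g \<in> \<Gamma>\<close> g(1)] g(4) by simp
  ultimately have "{v, w} \<in> E"
    unfolding w_def by simp
  moreover have "g w = y"
    unfolding w_def using apply_inv_apply[OF \<open>g \<in> \<Gamma>\<close> assms(3)] .
  ultimately show ?thesis
    unfolding orbit_rel_def using \<open>w \<in> V\<close> assms(3) g(3) by blast
qed

context
  fixes h assumes h: "h \<in> \<Gamma>"
    and normalises: "\<And>m. m \<in> M \<Longrightarrow> h \<otimes>\<^bsub>G\<^esub> m \<otimes>\<^bsub>G\<^esub> inv\<^bsub>G\<^esub> h \<in> M"
    and normalises_inv: "\<And>m. m \<in> M \<Longrightarrow> inv\<^bsub>G\<^esub> h \<otimes>\<^bsub>G\<^esub> m \<otimes>\<^bsub>G\<^esub> h \<in> M"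
begin

lemma orbit_rel_apply_iff:
  assumes "x \<in> V" and "y \<in> V"
  shows "orbit_rel M (h x) (h y) \<longleftrightarrow> orbit_rel M x y"
proof
  assume "orbit_rel M (h x) (h y)"
  then obtain g where g: "g \<in> M" "g (h x) = h y"
    unfolding orbit_rel_def by blast
  have "(inv\<^bsub>G\<^esub> h \<otimes>\<^bsub>G\<^esub> g \<otimes>\<^bsub>G\<^esub> h) x = (inv\<^bsub>G\<^esub> h) (g (h x))"
    using mem_\<Gamma>_if_mem_M[OF g(1)] h assms(1) by (simp add: mult_apply apply_in_V)
  then have "(inv\<^bsub>G\<^esub> h \<otimes>\<^bsub>G\<^esub> g \<otimes>\<^bsub>G\<^esub> h) x = y"
    using g(2) inv_apply_apply[OF h assms(2)] by simp
  then show "orbit_rel M x y"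
    unfolding orbit_rel_def using assms normalises_inv g(1) by blast
next
  assume "orbit_rel M x y"
  then obtain g where g: "g \<in> M" "g x = y"
    unfolding orbit_rel_def by blast
  have "(h \<otimes>\<^bsub>G\<^esub> g \<otimes>\<^bsub>G\<^esub> inv\<^bsub>G\<^esub> h) (h x) = h (g ((inv\<^bsub>G\<^esub> h) (h x)))"
    using mem_\<Gamma>_if_mem_M[OF g(1)] h assms(1) by (simp add: mult_apply apply_in_V)
  then have "(h \<otimes>\<^bsub>G\<^esub> g \<otimes>\<^bsub>G\<^esub> inv\<^bsub>G\<^esub> h) (h x) = h y"
    using g(2) inv_apply_apply[OF h assms(1)] by simp
  then show "orbit_rel M (h x) (h y)"
    unfolding orbit_rel_def using assms apply_in_V[OF h] normalises g(1) by blast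
qed

lemma cyclic_coarsening_orbit_rel:
  "cyclic_coarsening V E (orbit_rel M) h (grp.ord h) (max_degree V E)"
proof unfold_locales
  show "finite V"
    by (rule finite_V)
  show "orbit_rel M x y \<Longrightarrow> x \<in> V \<and> y \<in> V" for x y
    unfolding orbit_rel_def by blast
  show "x \<in> V \<Longrightarrow> orbit_rel M x x" for x
    by (rule orbit_rel_refl)
  show "orbit_rel M x y \<Longrightarrow> orbit_rel M y x" for x y
    by (rule orbit_rel_sym)
  show "orbit_rel M x y \<Longrightarrow> orbit_rel M y z \<Longrightarrow> orbit_rel M x z" for x y z
    by (rule orbit_rel_trans)
  show "x \<in> V \<Longrightarrow> h x \<in> V" for x
    by (rule apply_in_V[OF h])
  show "x \<in> V \<Longrightarrow> y \<in> V \<Longrightarrow> orbit_rel M (h x) (h y) \<longleftrightarrow> orbit_rel M x y" for x y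
    by (rule orbit_rel_apply_iff)
  show "x \<in> V \<Longrightarrow> y \<in> V \<Longrightarrow> {h x, h y} \<in> E \<longleftrightarrow> {x, y} \<in> E" for x y
    by (rule edge_apply_iff[OF h])
  show "0 < grp.ord h"
    using grp.ord_ge_1[of h] finite_\<Gamma> h by simp
  show "(h ^^ grp.ord h) x = x" if "x \<in> V" for x
    using pow_apply[OF h that, of "grp.ord h"] grp.pow_ord_eq_1[of h] h one_apply[OF that] by simp
  show "orbit_rel M v x \<Longrightarrow> {x, y} \<in> E \<Longrightarrow> y \<in> V \<Longrightarrow> \<exists>w\<in>V. {v, w} \<in> E \<and> orbit_rel M w y"
    for v x y
    by (rule orbit_rel_neighbour)
  show "v \<in> V \<Longrightarrow> degree V E v \<le> max_degree V E" for v
    by (rule degree_le_max_degree)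
qed

lemma orbit_rel_adjoin_iff:
  "orbit_rel (adjoin G M h) x y \<longleftrightarrow> x \<in> V \<and> y \<in> V \<and> (\<exists>i. orbit_rel M ((h ^^ i) x) y)"
proof
  assume "orbit_rel (adjoin G M h) x y"
  then obtain m i where mi: "x \<in> V" "y \<in> V" "m \<in> M" "(m \<otimes>\<^bsub>G\<^esub> h [^]\<^bsub>G\<^esub> (i::nat)) x = y"
    unfolding orbit_rel_def adjoin_def by blast
  have "m ((h ^^ i) x) = y"
    using mult_apply[OF mem_\<Gamma>_if_mem_M[OF mi(3)] _ mi(1)] pow_apply[OF h mi(1)] mi(4) h by simp
  moreover have "(h ^^ i) x \<in> V"
    using mi(1) h apply_in_V by (induct i) auto
  ultimately show "x \<in> V \<and> y \<in> V \<and> (\<exists>i. orbit_rel M ((h ^^ i) x) y)"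
    unfolding orbit_rel_def using mi by blast
next
  assume "x \<in> V \<and> y \<in> V \<and> (\<exists>i. orbit_rel M ((h ^^ i) x) y)"
  then obtain i m where mi: "x \<in> V" "y \<in> V" "m \<in> M" "m ((h ^^ i) x) = y"
    unfolding orbit_rel_def by blast
  have "(m \<otimes>\<^bsub>G\<^esub> h [^]\<^bsub>G\<^esub> i) x = y"
    using mult_apply[OF mem_\<Gamma>_if_mem_M[OF mi(3)] _ mi(1)] pow_apply[OF h mi(1)] mi(4) h by simp
  then show "orbit_rel (adjoin G M h) x y"
    unfolding orbit_rel_def adjoin_def using mi by blast
qed

lemma bounded_merges_adjoin:
  "(bounded_merge E (4 * max_degree V E))\<^sup>*\<^sup>* (orbit_partition V M) (orbit_partition V (adjoin G M h))"
proof -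
  interpret cyclic_coarsening V E "orbit_rel M" h "grp.ord h" "max_degree V E"
    by (rule cyclic_coarsening_orbit_rel)
  have "joined = orbit_rel (adjoin G M h)"
    by (intro ext) (simp add: joined_def orbit_rel_adjoin_iff)
  moreover have "M \<subseteq> \<Gamma>" and "adjoin G M h \<subseteq> \<Gamma>"
    using mem_\<Gamma>_if_mem_M grp.adjoin_subset[OF grp.subgroup_self] h by auto
  ultimately show ?thesis
    using bounded_merges_to_joined_classes by (simp add: orbit_partition_eq_orbit_rel_classes)
qed

end

end

lemma bounded_merges_to_subgroup:
  assumes "subgroup H G" and "subgroup M G" and "M \<subseteq> H" and "derived_set G H \<subseteq> M"
  shows "(bounded_merge E (4 * max_degree V E))\<^sup>*\<^sup>* (orbit_partition V M) (orbit_partition V H)"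
  using assms(2-4)
proof (induction "card (H - M)" arbitrary: M rule: less_induct)
  case less
  show ?case
  proof (cases "M = H")
    case False
    then obtain h where h: "h \<in> H" "h \<notin> M"
      using less.prems(2) by blast
    have "h \<in> \<Gamma>"
      using subgroup.mem_carrier[OF assms(1) h(1)] by simp
    note between = grp.adjoin_between[OF _ assms(1) less.prems h(1), unfolded carrier_G, OF finite_\<Gamma>]
    have "\<And>m. m \<in> M \<Longrightarrow> h \<otimes>\<^bsub>G\<^esub> m \<otimes>\<^bsub>G\<^esub> inv\<^bsub>G\<^esub> h \<in> M"
      by (rule grp.conj_mem_if_derived_set_subset[OF assms(1) less.prems h(1)])
    moreover have "\<And>m. m \<in> M \<Longrightarrow> inv\<^bsub>G\<^esub> h \<otimes>\<^bsub>G\<^esub> m \<otimes>\<^bsub>G\<^esub> h \<in> M"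
      using grp.conj_mem_if_derived_set_subset[OF assms(1) less.prems
          subgroup.m_inv_closed[OF assms(1) h(1)]] \<open>h \<in> \<Gamma>\<close> by simp
    ultimately have "(bounded_merge E (4 * max_degree V E))\<^sup>*\<^sup>* (orbit_partition V M)
        (orbit_partition V (adjoin G M h))"
      by (rule bounded_merges_adjoin[OF less.prems(1) \<open>h \<in> \<Gamma>\<close>])
    moreover have "H - adjoin G M h \<subset> H - M"
      using between(2,3) h by blast
    then have "card (H - adjoin G M h) < card (H - M)"
      using finite_subset[OF subgroup.subset[OF assms(1), unfolded carrier_G] finite_\<Gamma>]
      by (intro psubset_card_mono) auto
    then have "(bounded_merge E (4 * max_degree V E))\<^sup>*\<^sup>* (orbit_partition V (adjoin G M h))
        (orbit_partition V H)"
      using less.hyps[OF _ between(1,4) subset_trans[OF less.prems(3) between(2)]] by blast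
    ultimately show ?thesis
      by (rule rtranclp_trans)
  qed simp
qed

lemma bounded_merges_solvable_seq:
  assumes "solvable_seq G H"
  shows "(bounded_merge E (4 * max_degree V E))\<^sup>*\<^sup>* (singletons V) (orbit_partition V H)"
  using assms
proof (induction rule: solvable_seq.induct)
  case unity
  have "{g v | g. g \<in> {\<one>\<^bsub>G\<^esub>}} = {v}" if "v \<in> V" for v
    using one_apply[OF that] by auto
  then have "orbit_partition V {\<one>\<^bsub>G\<^esub>} = singletons V"
    unfolding orbit_partition_def singletons_def by blast
  then show ?case
    by simp
next
  case (extension K H)
  have K: "subgroup K G" and "K \<subseteq> H"
    using grp.incl_subgroup[OF extension.hyps(3) normal_imp_subgroup[OF extension.hyps(2)]]
      subgroup.subset[OF normal_imp_subgroup[OF extension.hyps(2)]] by simp_all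
  have "derived_set G H \<subseteq> derived G H"
    unfolding derived_def by (intro subsetI generate.incl)
  then have "derived_set G H \<subseteq> K"
    using grp.derived_of_subgroup_minimal[OF extension.hyps(2-4)] by (rule subset_trans)
  then have "(bounded_merge E (4 * max_degree V E))\<^sup>*\<^sup>* (orbit_partition V K) (orbit_partition V H)"
    by (rule bounded_merges_to_subgroup[OF extension.hyps(3) K \<open>K \<subseteq> H\<close>])
  with extension.IH show ?case
    by (rule rtranclp_trans)
qed

end

theorem mainTheorem16:
  fixes V :: "'a set" and E R :: "'a set set" and \<Gamma> :: "('a \<Rightarrow> 'a) set"
  assumes "trigraph V E R"
    and "subgroup \<Gamma> (BijGroup V)"
    and "\<Gamma> \<subseteq> Aut V E"
    and "solvable ((BijGroup V)\<lparr>carrier := \<Gamma>\<rparr>)"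
  shows "\<exists>Ps. partial_contraction_seq V Ps \<and> seq_width_le E R Ps (4 * max_degree V E)
             \<and> last Ps = orbit_partition V \<Gamma>"
proof -
  interpret aut_group V E \<Gamma>
    by (rule aut_group.intro) (use assms(1-3) in \<open>simp_all add: trigraph_def\<close>)
  have "solvable_seq G \<Gamma>"
    using assms(4) unfolding solvable_def G_def by simp
  then have "(bounded_merge E (4 * max_degree V E))\<^sup>*\<^sup>* (singletons V) (orbit_partition V \<Gamma>)"
    by (rule bounded_merges_solvable_seq)
  moreover have "adjacency_bounded E (4 * max_degree V E) (singletons V)"
    using degree_le_max_degree by (intro adjacency_bounded_singletons[OF finite_V]) fastforce
  ultimately show ?thesis
    by (rule partial_contraction_seq_if_bounded_merges)
qed

end
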